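(* Let $m$, $n$, $k$ be integers with $0 \le n < m \le N$ and $2 \le k \le N$. Then \[ \int_{\Lambda} \frac{y_1\prod_{i=2}^{n+1} y_i^2 \prod_{i=n+2}^{m} y_i}{y_1 - y_k}\,\Phi(y)\,dy = \begin{cases} -\dfrac{1}{2}\displaystyle\int_{\Lambda} \prod_{i=1}^{n-1} y_i^2 \prod_{i=n}^{m} y_i\,\Phi(y)\,dy & \text{if } 2 \le k \le n+1,\\[8pt] 0 & \text{if } n+2 \le k \le m,\\[2pt] \dfrac{1}{2}\displaystyle\int_{\Lambda} \prod_{i=1}^{n} y_i^2 \prod_{i=n+1}^{m-1} y_i\,\Phi(y)\,dy & \text{if } m+1 \le k \le N. \end{cases} \]
   Context: Let $N\ge 1$ be an integer and let $a,b,\rho$ be complex numbers with $\mathrm{Re}(a)>0$, $\mathrm{Re}(b)>0$ and $\mathrm{Re}(\rho) > -\min\{1/N,\ \mathrm{Re}(a)/(N-1),\ \mathrm{Re}(b)/(N-1)\}$ (replaced by $\mathrm{Re}(\rho)>-1$ when $N=1$). Let $\Lambda=(0,1)^N$ and for $y\in\Lambda$ put $\Phi(y)=\prod_{i=1}^N y_i^{a-1}(1-y_i)^{b-1}\prod_{1\le i<j\le N}|y_i-y_j|^{2\rho}$; $dy$ is Lebesgue measure on $\Lambda$. Empty products equal $1$. The parameters are assumed such that all integrals appearing converge absolutely. *)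

theory Defs
  imports "HOL-Analysis.Analysis" "HOL-Probability.Probability"
begin

definition lebN :: "nat \<Rightarrow> (nat \<Rightarrow> real) measure" where
  "lebN N = (\<Pi>\<^sub>M i\<in>{1..N}. lborel)"

definition Lam :: "nat \<Rightarrow> (nat \<Rightarrow> real) set" where
  "Lam N = PiE {1..N} (\<lambda>_. {0<..<1})"

definition Phi :: "nat \<Rightarrow> complex \<Rightarrow> complex \<Rightarrow> complex \<Rightarrow> (nat \<Rightarrow> real) \<Rightarrow> complex" where
  "Phi N a b rho y =
     (\<Prod>i\<in>{1..N}. complex_of_real (y i) powr (a - 1) * complex_of_real (1 - y i) powr (b - 1)) *
     (\<Prod>(i,j)\<in>{(i,j). 1 \<le> i \<and> i < j \<and> j \<le> N}. complex_of_real \<bar>y i - y j\<bar> powr (2 * rho))"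

definition admissible :: "nat \<Rightarrow> complex \<Rightarrow> complex \<Rightarrow> complex \<Rightarrow> bool" where
  "admissible N a b rho \<longleftrightarrow> N \<ge> 1 \<and> Re a > 0 \<and> Re b > 0 \<and>
     (if N = 1 then Re rho > -1
      else Re rho > - min (1 / real N) (min (Re a / (real N - 1)) (Re b / (real N - 1))))"

end

theory Submission
  imports Defs
begin

text \<open>Swapping the coordinates \<open>y\<^sub>1\<close> and \<open>y\<^sub>k\<close> preserves Lebesgue measure, the cube and \<open>\<Phi>\<close>.
  Averaging the integrand with its image therefore replaces \<open>u(y)/(y\<^sub>1 - y\<^sub>k)\<close> by half the divided
  difference \<open>(u(y) - u(y\<^sub>1 \<leftrightarrow> y\<^sub>k))/(y\<^sub>1 - y\<^sub>k)\<close>, which is a polynomial: it vanishes when \<open>y\<^sub>1\<close>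
  and \<open>y\<^sub>k\<close> enter \<open>u\<close> symmetrically, it is \<open>-y\<^sub>1 y\<^sub>k\<close> times the remaining monomial when \<open>y\<^sub>k\<close> occurs
  squared, and it is \<open>u/y\<^sub>1\<close> when \<open>y\<^sub>k\<close> does not occur. A relabelling of the coordinates, under which
  \<open>\<Phi>\<close> is invariant as well, brings the resulting monomial into the stated form.\<close>

lemma comp_permutes_in_PiE:
  assumes "s permutes I" "y \<in> PiE I (\<lambda>_. B)"
  shows "y \<circ> s \<in> PiE I (\<lambda>_. B)"
  using assms by (auto simp: PiE_iff extensional_def permutes_in_image permutes_not_in)

lemma comp_permutes_in_PiE_iff:
  assumes s: "s permutes I"
  shows "y \<circ> s \<in> PiE I (\<lambda>_. B) \<longleftrightarrow> y \<in> PiE I (\<lambda>_. B)"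
proof
  assume "y \<circ> s \<in> PiE I (\<lambda>_. B)"
  from comp_permutes_in_PiE[OF permutes_inv[OF s] this] show "y \<in> PiE I (\<lambda>_. B)"
    by (simp add: comp_assoc permutes_inv_o[OF s])
qed (rule comp_permutes_in_PiE[OF s])

lemma measurable_comp_permutes:
  assumes "s permutes I"
  shows "(\<lambda>y. y \<circ> s) \<in> Pi\<^sub>M I (\<lambda>_. M) \<rightarrow>\<^sub>M Pi\<^sub>M I (\<lambda>_. M)"
proof (rule measurable_PiM_single')
  show "(\<lambda>y. (y \<circ> s) i) \<in> Pi\<^sub>M I (\<lambda>_. M) \<rightarrow>\<^sub>M M" if "i \<in> I" for i
    using that assms by (simp add: permutes_in_image)
  show "(\<lambda>y. y \<circ> s) \<in> space (Pi\<^sub>M I (\<lambda>_. M)) \<rightarrow> (\<Pi>\<^sub>E i\<in>I. space M)"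
    unfolding space_PiM using comp_permutes_in_PiE[OF assms] by blast
qed

lemma vimage_comp_permutes_PiE:
  assumes s: "s permutes I" and A: "\<And>i. i \<in> I \<Longrightarrow> A i \<subseteq> B"
  shows "(\<lambda>y. y \<circ> s) -` Pi\<^sub>E I A \<inter> Pi\<^sub>E I (\<lambda>_. B) = Pi\<^sub>E I (A \<circ> inv s)"
proof (intro set_eqI iffI)
  have inv_s: "inv s permutes I"
    using s by (rule permutes_inv)
  fix y
  show "y \<in> Pi\<^sub>E I (A \<circ> inv s)" if "y \<in> (\<lambda>y. y \<circ> s) -` Pi\<^sub>E I A \<inter> Pi\<^sub>E I (\<lambda>_. B)"
  proof -
    have "y (s (inv s i)) \<in> A (inv s i)" if "i \<in> I" for i
      using \<open>y \<in> (\<lambda>y. y \<circ> s) -` Pi\<^sub>E I A \<inter> Pi\<^sub>E I (\<lambda>_. B)\<close> permutes_in_image[OF inv_s] that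
      by (auto simp: PiE_iff)
    with that show ?thesis
      by (auto simp: PiE_iff permutes_inverses(1)[OF s])
  qed
  show "y \<in> (\<lambda>y. y \<circ> s) -` Pi\<^sub>E I A \<inter> Pi\<^sub>E I (\<lambda>_. B)" if "y \<in> Pi\<^sub>E I (A \<circ> inv s)"
  proof -
    have "y (s i) \<in> A (inv s (s i))" if "i \<in> I" for i
      using \<open>y \<in> Pi\<^sub>E I (A \<circ> inv s)\<close> permutes_in_image[OF s] that by (auto simp: PiE_iff)
    moreover have "y i \<in> B" if "i \<in> I" for i
      using \<open>y \<in> Pi\<^sub>E I (A \<circ> inv s)\<close> A permutes_in_image[OF inv_s] that by (auto simp: PiE_iff)
    ultimately show ?thesis
      using that s by (auto simp: PiE_iff extensional_def permutes_inverses(2)[OF s] permutes_not_in)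
  qed
qed

lemma distr_PiM_comp_permutes:
  assumes "finite I" "sigma_finite_measure M" and s: "s permutes I"
  shows "distr (Pi\<^sub>M I (\<lambda>_. M)) (Pi\<^sub>M I (\<lambda>_. M)) (\<lambda>y. y \<circ> s) = Pi\<^sub>M I (\<lambda>_. M)"
proof -
  interpret product_sigma_finite "\<lambda>_. M"
    using assms(2) by (simp add: product_sigma_finite_def)
  show ?thesis
  proof (rule PiM_eqI)
    fix A assume A: "\<And>i. i \<in> I \<Longrightarrow> A i \<in> sets M"
    have inv_s: "inv s permutes I"
      using s by (rule permutes_inv)
    have "Pi\<^sub>E I A \<in> sets (Pi\<^sub>M I (\<lambda>_. M))"
      using A by (simp add: sets_PiM_I_finite \<open>finite I\<close>)
    then have "emeasure (distr (Pi\<^sub>M I (\<lambda>_. M)) (Pi\<^sub>M I (\<lambda>_. M)) (\<lambda>y. y \<circ> s)) (Pi\<^sub>E I A)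
        = emeasure (Pi\<^sub>M I (\<lambda>_. M)) (Pi\<^sub>E I (A \<circ> inv s))"
      using vimage_comp_permutes_PiE[OF s sets.sets_into_space[OF A]]
      by (simp add: emeasure_distr measurable_comp_permutes[OF s] space_PiM)
    also have "\<dots> = (\<Prod>i\<in>I. emeasure M (A (inv s i)))"
      using A inv_s \<open>finite I\<close> by (simp add: emeasure_PiM permutes_in_image)
    also have "\<dots> = (\<Prod>i\<in>I. emeasure M (A i))"
      using prod.permute[OF inv_s, of "\<lambda>i. emeasure M (A i)"] by (simp add: o_def)
    finally show "emeasure (distr (Pi\<^sub>M I (\<lambda>_. M)) (Pi\<^sub>M I (\<lambda>_. M)) (\<lambda>y. y \<circ> s)) (Pi\<^sub>E I A)
        = (\<Prod>i\<in>I. emeasure M (A i))" .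
  qed (use assms in simp_all)
qed

lemma integrable_PiM_comp_permutes_iff:
  fixes f :: "('i \<Rightarrow> 'a) \<Rightarrow> 'b::{banach, second_countable_topology}"
  assumes "finite I" "sigma_finite_measure M" and s: "s permutes I"
  shows "integrable (Pi\<^sub>M I (\<lambda>_. M)) (\<lambda>y. f (y \<circ> s)) \<longleftrightarrow> integrable (Pi\<^sub>M I (\<lambda>_. M)) f"
proof
  have inv_s: "inv s permutes I"
    using s by (rule permutes_inv)
  assume "integrable (Pi\<^sub>M I (\<lambda>_. M)) (\<lambda>y. f (y \<circ> s))"
  then have "integrable (distr (Pi\<^sub>M I (\<lambda>_. M)) (Pi\<^sub>M I (\<lambda>_. M)) (\<lambda>y. y \<circ> inv s)) (\<lambda>y. f (y \<circ> s))"
    using distr_PiM_comp_permutes[OF assms(1,2) inv_s] by simp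
  from integrable_distr[OF measurable_comp_permutes[OF inv_s] this]
  show "integrable (Pi\<^sub>M I (\<lambda>_. M)) f"
    by (simp add: comp_assoc permutes_inv_o[OF s])
next
  assume "integrable (Pi\<^sub>M I (\<lambda>_. M)) f"
  then show "integrable (Pi\<^sub>M I (\<lambda>_. M)) (\<lambda>y. f (y \<circ> s))"
    using distr_PiM_comp_permutes[OF assms] integrable_distr[OF measurable_comp_permutes[OF s]]
    by metis
qed

lemma integral_PiM_comp_permutes:
  fixes f :: "('i \<Rightarrow> 'a) \<Rightarrow> 'b::{banach, second_countable_topology}"
  assumes "finite I" "sigma_finite_measure M" and s: "s permutes I"
  shows "(\<integral>y. f (y \<circ> s) \<partial>Pi\<^sub>M I (\<lambda>_. M)) = (\<integral>y. f y \<partial>Pi\<^sub>M I (\<lambda>_. M))"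
proof (cases "integrable (Pi\<^sub>M I (\<lambda>_. M)) f")
  case True
  then show ?thesis
    using integral_distr[OF measurable_comp_permutes[OF s] borel_measurable_integrable[OF True]]
    by (simp add: distr_PiM_comp_permutes[OF assms])
next
  case False
  then show ?thesis
    by (simp add: integrable_PiM_comp_permutes_iff[OF assms] not_integrable_integral_eq)
qed

lemma indicator_Lam_comp_permutes:
  "s permutes {1..N} \<Longrightarrow> indicator (Lam N) (y \<circ> s) = indicator (Lam N) y"
  by (simp add: indicator_def Lam_def comp_permutes_in_PiE_iff)

lemma set_integrable_Lam_comp_permutes_iff:
  fixes f :: "(nat \<Rightarrow> real) \<Rightarrow> 'b::{banach, second_countable_topology}"
  assumes "s permutes {1..N}"
  shows "set_integrable (lebN N) (Lam N) (\<lambda>y. f (y \<circ> s)) \<longleftrightarrow> set_integrable (lebN N) (Lam N) f"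
  using integrable_PiM_comp_permutes_iff[OF _ lborel.sigma_finite_measure_axioms assms,
      of "\<lambda>y. indicator (Lam N) y *\<^sub>R f y"]
  by (simp add: set_integrable_def lebN_def indicator_Lam_comp_permutes[OF assms])

lemma set_integral_Lam_comp_permutes:
  fixes f :: "(nat \<Rightarrow> real) \<Rightarrow> 'b::{banach, second_countable_topology}"
  assumes "s permutes {1..N}"
  shows "(LINT y:Lam N|lebN N. f (y \<circ> s)) = (LINT y:Lam N|lebN N. f y)"
  using integral_PiM_comp_permutes[OF _ lborel.sigma_finite_measure_axioms assms,
      of "\<lambda>y. indicator (Lam N) y *\<^sub>R f y"]
  by (simp add: set_lebesgue_integral_def lebN_def indicator_Lam_comp_permutes[OF assms])

lemma prod_ordered_pairs_comp_permutes:
  fixes f :: "'i::linorder \<Rightarrow> 'i \<Rightarrow> 'a::comm_monoid_mult"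
  assumes s: "s permutes I" and sym: "\<And>u v. f u v = f v u"
  shows "(\<Prod>(i,j)\<in>{(i,j). i \<in> I \<and> j \<in> I \<and> i < j}. f (s i) (s j))
       = (\<Prod>(i,j)\<in>{(i,j). i \<in> I \<and> j \<in> I \<and> i < j}. f i j)"
proof -
  define sort_by where "sort_by p = (\<lambda>(i, j). (min (p i) (p j), max (p i) (p j)))" for p :: "'i \<Rightarrow> 'i"
  have inv_s: "inv s permutes I"
    using s by (rule permutes_inv)
  have inj: "s i = s j \<longleftrightarrow> i = j" "inv s i = inv s j \<longleftrightarrow> i = j" for i j
    using permutes_inj[OF s] permutes_inj[OF inv_s] by (auto dest: injD)
  show ?thesis
  proof (rule prod.reindex_bij_witness[where i = "sort_by (inv s)" and j = "sort_by s"])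
  qed (use s inv_s inj in \<open>auto simp: sort_by_def min_def max_def less_le permutes_inverses permutes_in_image sym split: if_splits\<close>)
qed

lemma Phi_comp_permutes:
  assumes s: "s permutes {1..N}"
  shows "Phi N a b rho (y \<circ> s) = Phi N a b rho y"
proof -
  have pairs: "{(i,j). 1 \<le> i \<and> i < j \<and> j \<le> N} = {(i,j). i \<in> {1..N} \<and> j \<in> {1..N} \<and> i < j}"
    by auto
  have "(\<Prod>i\<in>{1..N}. complex_of_real (y (s i)) powr (a - 1) * complex_of_real (1 - y (s i)) powr (b - 1))
      = (\<Prod>i\<in>{1..N}. complex_of_real (y i) powr (a - 1) * complex_of_real (1 - y i) powr (b - 1))"
    using prod.permute[OF s, of "\<lambda>i. complex_of_real (y i) powr (a - 1) * complex_of_real (1 - y i) powr (b - 1)"]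
    by (simp add: o_def)
  moreover have "(\<Prod>(i,j)\<in>{(i,j). 1 \<le> i \<and> i < j \<and> j \<le> N}. complex_of_real \<bar>y (s i) - y (s j)\<bar> powr (2 * rho))
      = (\<Prod>(i,j)\<in>{(i,j). 1 \<le> i \<and> i < j \<and> j \<le> N}. complex_of_real \<bar>y i - y j\<bar> powr (2 * rho))"
    unfolding pairs by (rule prod_ordered_pairs_comp_permutes[OF s]) (simp add: abs_minus_commute)
  ultimately show ?thesis
    by (simp add: Phi_def)
qed

lemma Phi_eq_0_if_coordinates_coincide:
  assumes "1 \<le> i" "i < j" "j \<le> N" "y i = y j"
  shows "Phi N a b rho y = 0"
proof -
  have "finite {(i,j). 1 \<le> i \<and> i < j \<and> j \<le> (N::nat)}"
    by (rule finite_subset[of _ "{1..N} \<times> {1..N}"]) auto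
  then have "(\<Prod>(i,j)\<in>{(i,j). 1 \<le> i \<and> i < j \<and> j \<le> N}. complex_of_real \<bar>y i - y j\<bar> powr (2 * rho)) = 0"
    by (rule prod_zero) (use assms in auto)
  then show ?thesis
    by (simp add: Phi_def)
qed

lemma set_integral_Phi_comp_permutes:
  assumes "s permutes {1..N}"
  shows "(LINT y:Lam N|lebN N. complex_of_real (p (y \<circ> s)) * Phi N a b rho y)
       = (LINT y:Lam N|lebN N. complex_of_real (p y) * Phi N a b rho y)"
  using set_integral_Lam_comp_permutes[OF assms, of "\<lambda>y. complex_of_real (p y) * Phi N a b rho y"]
  by (simp add: Phi_comp_permutes[OF assms])

lemma set_integral_divided_difference:
  fixes u p :: "(nat \<Rightarrow> real) \<Rightarrow> real"
  assumes k: "2 \<le> k" "k \<le> N"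
    and int: "set_integrable (lebN N) (Lam N) (\<lambda>y. complex_of_real (u y / (y 1 - y k)) * Phi N a b rho y)"
    and diff: "\<And>y. y 1 \<noteq> y k \<Longrightarrow> u y - u (y \<circ> Transposition.transpose 1 k) = (y 1 - y k) * p y"
  shows "(LINT y:Lam N|lebN N. complex_of_real (u y / (y 1 - y k)) * Phi N a b rho y)
       = 1/2 * (LINT y:Lam N|lebN N. complex_of_real (p y) * Phi N a b rho y)"
proof -
  define t where "t = Transposition.transpose (1::nat) k"
  define F where "F y = complex_of_real (u y / (y 1 - y k)) * Phi N a b rho y" for y
  have t: "t permutes {1..N}"
    unfolding t_def using k by (intro permutes_swap_id) auto
  have "F y + F (y \<circ> t) = complex_of_real (p y) * Phi N a b rho y" for y
  proof (cases "y 1 = y k")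
    case True
    \<comment> \<open>Both quotients are junk \<open>x / 0 = 0\<close> on the diagonal, where \<open>\<Phi>\<close> vanishes anyway.\<close>
    then show ?thesis
      using k Phi_eq_0_if_coordinates_coincide[of 1 k N y] by (simp add: F_def t_def)
  next
    case False
    have "u (y \<circ> t) / (y k - y 1) = - (u (y \<circ> t) / (y 1 - y k))"
      by (metis minus_diff_eq divide_minus_right)
    then have "u y / (y 1 - y k) + u (y \<circ> t) / (y k - y 1) = (u y - u (y \<circ> t)) / (y 1 - y k)"
      by (simp add: diff_divide_distrib)
    also have "\<dots> = p y"
      using False diff[of y] by (simp add: t_def)
    finally have sum: "u y / (y 1 - y k) + u (y \<circ> t) / (y k - y 1) = p y" .
    have "(y \<circ> t) 1 = y k" "(y \<circ> t) k = y 1"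
      by (simp_all add: t_def)
    then show ?thesis
      unfolding F_def Phi_comp_permutes[OF t] by (simp only: sum[symmetric] of_real_add distrib_right)
  qed
  then have "(LINT y:Lam N|lebN N. complex_of_real (p y) * Phi N a b rho y)
      = (LINT y:Lam N|lebN N. F y + F (y \<circ> t))"
    by simp
  also have "\<dots> = (LINT y:Lam N|lebN N. F y) + (LINT y:Lam N|lebN N. F (y \<circ> t))"
    using int set_integrable_Lam_comp_permutes_iff[OF t, of F] unfolding F_def[abs_def]
    by (intro set_integral_add) simp_all
  also have "\<dots> = 2 * (LINT y:Lam N|lebN N. F y)"
    by (simp add: set_integral_Lam_comp_permutes[OF t])
  finally have "(LINT y:Lam N|lebN N. complex_of_real (p y) * Phi N a b rho y) = 2 * (LINT y:Lam N|lebN N. F y)" .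
  then show ?thesis
    by (simp add: F_def)
qed

definition cyclic_shift :: "nat \<Rightarrow> nat \<Rightarrow> nat" where
  "cyclic_shift n i = (if 1 \<le> i \<and> i < n then i + 1 else if i = n then 1 else i)"

lemma cyclic_shift_permutes:
  assumes "1 \<le> n" "n \<le> N"
  shows "cyclic_shift n permutes {1..N}"
  using assms by (intro inj_imp_permutes) (auto simp: cyclic_shift_def inj_on_def split: if_splits)

lemma prod_cyclic_shift:
  assumes "1 \<le> i" "j < n"
  shows "(\<Prod>l\<in>{i..j}. g (cyclic_shift n l)) = (\<Prod>l\<in>{i+1..j+1}. g l)"
proof -
  have "(\<Prod>l\<in>{i..j}. g (cyclic_shift n l)) = (\<Prod>l\<in>{i..j}. g (l + 1))"
    using assms by (intro prod.cong) (auto simp: cyclic_shift_def)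
  then show ?thesis
    by (simp only: prod.shift_bounds_cl_nat_ivl)
qed

lemma prod_comp_cyclic_shift_squares:
  fixes y :: "nat \<Rightarrow> real"
  assumes n: "1 \<le> n" and nm: "n < m"
  shows "(\<Prod>i\<in>{1..n-1}. ((y \<circ> cyclic_shift n) i)\<^sup>2) * (\<Prod>i\<in>{n..m}. (y \<circ> cyclic_shift n) i)
       = y 1 * y (n+1) * (\<Prod>i\<in>{2..n}. (y i)\<^sup>2) * (\<Prod>i\<in>{n+2..m}. y i)"
proof -
  have "(\<Prod>i\<in>{1..n-1}. (y (cyclic_shift n i))\<^sup>2) = (\<Prod>i\<in>{2..n}. (y i)\<^sup>2)"
    using prod_cyclic_shift[of 1 "n - 1" n "\<lambda>i. (y i)\<^sup>2"] n by (simp add: numeral_2_eq_2)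
  moreover have "(\<Prod>i\<in>{n+1..m}. y (cyclic_shift n i)) = (\<Prod>i\<in>{n+1..m}. y i)"
    by (intro prod.cong) (auto simp: cyclic_shift_def)
  then have "(\<Prod>i\<in>{n..m}. y (cyclic_shift n i)) = y 1 * (\<Prod>i\<in>{n+1..m}. y i)"
    using nm by (simp add: prod.atLeast_Suc_atMost cyclic_shift_def)
  moreover have "(\<Prod>i\<in>{n+1..m}. y i) = y (n+1) * (\<Prod>i\<in>{n+2..m}. y i)"
    using nm by (simp add: prod.atLeast_Suc_atMost)
  ultimately show ?thesis
    by (simp add: mult_ac)
qed

lemma integral_divided_difference_last_square_index:
  fixes N m n :: nat and a b rho :: complex
  assumes n: "1 \<le> n" and nm: "n < m" and mN: "m \<le> N"
    and int: "set_integrable (lebN N) (Lam N)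
       (\<lambda>y. complex_of_real (y 1 * (\<Prod>i\<in>{2..n+1}. (y i)\<^sup>2) * (\<Prod>i\<in>{n+2..m}. y i) / (y 1 - y (n+1)))
            * Phi N a b rho y)"
  shows "(LINT y:Lam N|lebN N. complex_of_real (y 1 * (\<Prod>i\<in>{2..n+1}. (y i)\<^sup>2) * (\<Prod>i\<in>{n+2..m}. y i) / (y 1 - y (n+1))) * Phi N a b rho y)
      = - (1/2) * (LINT y:Lam N|lebN N. complex_of_real ((\<Prod>i\<in>{1..n-1}. (y i)\<^sup>2) * (\<Prod>i\<in>{n..m}. y i)) * Phi N a b rho y)"
proof -
  define t where "t = Transposition.transpose (1::nat) (n+1)"
  define D where "D y = y 1 * y (n+1) * (\<Prod>i\<in>{2..n}. (y i)\<^sup>2) * (\<Prod>i\<in>{n+2..m}. y i)" for y :: "nat \<Rightarrow> real"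
  define target where "target y = (\<Prod>i\<in>{1..n-1}. (y i)\<^sup>2) * (\<Prod>i\<in>{n..m}. y i)" for y :: "nat \<Rightarrow> real"
  have diff: "y 1 * (\<Prod>i\<in>{2..n+1}. (y i)\<^sup>2) * (\<Prod>i\<in>{n+2..m}. y i)
      - (y \<circ> t) 1 * (\<Prod>i\<in>{2..n+1}. ((y \<circ> t) i)\<^sup>2) * (\<Prod>i\<in>{n+2..m}. (y \<circ> t) i)
      = (y 1 - y (n+1)) * - D y"
    if "y 1 \<noteq> y (n+1)" for y :: "nat \<Rightarrow> real"
  proof -
    have "(\<Prod>i\<in>{2..n}. ((y \<circ> t) i)\<^sup>2) = (\<Prod>i\<in>{2..n}. (y i)\<^sup>2)"
      by (intro prod.cong) (auto simp: t_def)
    moreover have "(\<Prod>i\<in>{n+2..m}. (y \<circ> t) i) = (\<Prod>i\<in>{n+2..m}. y i)"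
      by (intro prod.cong) (auto simp: t_def)
    moreover have "(\<Prod>i\<in>{2..n+1}. g i) = (\<Prod>i\<in>{2..n}. g i) * g (n+1)" for g :: "nat \<Rightarrow> real"
      using n by simp
    moreover have "(y \<circ> t) 1 = y (n+1)" "(y \<circ> t) (n+1) = y 1"
      by (simp_all add: t_def)
    ultimately show ?thesis
      by (simp only: D_def) (simp add: algebra_simps power2_eq_square)
  qed
  have "(LINT y:Lam N|lebN N. complex_of_real (y 1 * (\<Prod>i\<in>{2..n+1}. (y i)\<^sup>2) * (\<Prod>i\<in>{n+2..m}. y i) / (y 1 - y (n+1))) * Phi N a b rho y)
      = 1/2 * (LINT y:Lam N|lebN N. complex_of_real (- D y) * Phi N a b rho y)"
    by (rule set_integral_divided_difference[OF _ _ int diff[unfolded t_def]]) (use n nm mN in auto)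
  also have "\<dots> = - (1/2) * (LINT y:Lam N|lebN N. complex_of_real (target (y \<circ> cyclic_shift n)) * Phi N a b rho y)"
  proof -
    have "target (y \<circ> cyclic_shift n) = D y" for y
      using prod_comp_cyclic_shift_squares[OF n nm] by (simp add: target_def D_def)
    then show ?thesis
      by (simp add: set_lebesgue_integral_def)
  qed
  also have "\<dots> = - (1/2) * (LINT y:Lam N|lebN N. complex_of_real (target y) * Phi N a b rho y)"
    using n nm mN by (simp only: set_integral_Phi_comp_permutes[OF cyclic_shift_permutes])
  finally show ?thesis
    unfolding target_def .
qed

lemma integral_divided_difference_square_index:
  fixes N m n k :: nat and a b rho :: complex
  assumes k2: "2 \<le> k" and kn: "k \<le> n + 1" and nm: "n < m" and mN: "m \<le> N"
    and int: "set_integrable (lebN N) (Lam N)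
       (\<lambda>y. complex_of_real (y 1 * (\<Prod>i\<in>{2..n+1}. (y i)\<^sup>2) * (\<Prod>i\<in>{n+2..m}. y i) / (y 1 - y k))
            * Phi N a b rho y)"
  shows "(LINT y:Lam N|lebN N. complex_of_real (y 1 * (\<Prod>i\<in>{2..n+1}. (y i)\<^sup>2) * (\<Prod>i\<in>{n+2..m}. y i) / (y 1 - y k)) * Phi N a b rho y)
      = - (1/2) * (LINT y:Lam N|lebN N. complex_of_real ((\<Prod>i\<in>{1..n-1}. (y i)\<^sup>2) * (\<Prod>i\<in>{n..m}. y i)) * Phi N a b rho y)"
proof -
  define \<tau> where "\<tau> = Transposition.transpose k (n+1)"
  define G where "G j y = complex_of_real (y 1 * (\<Prod>i\<in>{2..n+1}. (y i)\<^sup>2) * (\<Prod>i\<in>{n+2..m}. y i) / (y 1 - y j))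
      * Phi N a b rho y" for j and y :: "nat \<Rightarrow> real"
  have \<tau>: "\<tau> permutes {1..N}" "\<tau> permutes {2..n+1}"
    unfolding \<tau>_def using k2 kn nm mN by (auto intro: permutes_swap_id)
  have G_\<tau>: "G (n+1) (y \<circ> \<tau>) = G k y" for y
  proof -
    have "(\<Prod>i\<in>{2..n+1}. ((y \<circ> \<tau>) i)\<^sup>2) = (\<Prod>i\<in>{2..n+1}. (y i)\<^sup>2)"
      using prod.permute[OF \<tau>(2), of "\<lambda>i. (y i)\<^sup>2"] by (simp add: comp_def)
    moreover have "(\<Prod>i\<in>{n+2..m}. (y \<circ> \<tau>) i) = (\<Prod>i\<in>{n+2..m}. y i)"
      using kn by (intro prod.cong) (auto simp: \<tau>_def)
    moreover have "(y \<circ> \<tau>) 1 = y 1" "(y \<circ> \<tau>) (n+1) = y k"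
      using k2 kn by (auto simp: \<tau>_def transpose_def)
    ultimately show ?thesis
      by (simp only: G_def Phi_comp_permutes[OF \<tau>(1)])
  qed
  have "set_integrable (lebN N) (Lam N) (\<lambda>y. G (n+1) (y \<circ> \<tau>))"
    unfolding G_\<tau> unfolding G_def by (fact int)
  then have "set_integrable (lebN N) (Lam N) (G (n+1))"
    by (simp only: set_integrable_Lam_comp_permutes_iff[OF \<tau>(1)])
  then have "(LINT y:Lam N|lebN N. G (n+1) y)
      = - (1/2) * (LINT y:Lam N|lebN N. complex_of_real ((\<Prod>i\<in>{1..n-1}. (y i)\<^sup>2) * (\<Prod>i\<in>{n..m}. y i)) * Phi N a b rho y)"
    unfolding G_def using k2 kn nm mN by (intro integral_divided_difference_last_square_index) auto
  moreover have "(LINT y:Lam N|lebN N. G (n+1) y) = (LINT y:Lam N|lebN N. G k y)"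
    using set_integral_Lam_comp_permutes[OF \<tau>(1), of "G (n+1)"] unfolding G_\<tau> by simp
  ultimately show ?thesis
    by (simp add: G_def)
qed

lemma integral_divided_difference_linear_index:
  fixes N m n k :: nat and a b rho :: complex
  assumes nk: "n + 2 \<le> k" and km: "k \<le> m" and mN: "m \<le> N"
    and int: "set_integrable (lebN N) (Lam N)
       (\<lambda>y. complex_of_real (y 1 * (\<Prod>i\<in>{2..n+1}. (y i)\<^sup>2) * (\<Prod>i\<in>{n+2..m}. y i) / (y 1 - y k))
            * Phi N a b rho y)"
  shows "(LINT y:Lam N|lebN N. complex_of_real (y 1 * (\<Prod>i\<in>{2..n+1}. (y i)\<^sup>2) * (\<Prod>i\<in>{n+2..m}. y i) / (y 1 - y k)) * Phi N a b rho y)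
      = 0"
proof -
  define t where "t = Transposition.transpose (1::nat) k"
  have diff: "y 1 * (\<Prod>i\<in>{2..n+1}. (y i)\<^sup>2) * (\<Prod>i\<in>{n+2..m}. y i)
      - (y \<circ> t) 1 * (\<Prod>i\<in>{2..n+1}. ((y \<circ> t) i)\<^sup>2) * (\<Prod>i\<in>{n+2..m}. (y \<circ> t) i) = (y 1 - y k) * 0"
    if "y 1 \<noteq> y k" for y :: "nat \<Rightarrow> real"
  proof -
    have k: "k \<in> {n+2..m}"
      using nk km by simp
    have "(\<Prod>i\<in>{2..n+1}. ((y \<circ> t) i)\<^sup>2) = (\<Prod>i\<in>{2..n+1}. (y i)\<^sup>2)"
      using nk by (intro prod.cong) (auto simp: t_def)
    moreover have "(\<Prod>i\<in>{n+2..m} - {k}. (y \<circ> t) i) = (\<Prod>i\<in>{n+2..m} - {k}. y i)"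
      using nk by (intro prod.cong) (auto simp: t_def)
    then have "(\<Prod>i\<in>{n+2..m}. (y \<circ> t) i) = y 1 * (\<Prod>i\<in>{n+2..m} - {k}. y i)"
      using prod.remove[OF _ k, of "y \<circ> t"] by (simp add: t_def)
    moreover have "(\<Prod>i\<in>{n+2..m}. y i) = y k * (\<Prod>i\<in>{n+2..m} - {k}. y i)"
      using prod.remove[OF _ k, of y] by simp
    moreover have "(y \<circ> t) 1 = y k"
      by (simp add: t_def)
    ultimately show ?thesis
      by (simp only:) (simp add: mult_ac)
  qed
  have "(LINT y:Lam N|lebN N. complex_of_real (y 1 * (\<Prod>i\<in>{2..n+1}. (y i)\<^sup>2) * (\<Prod>i\<in>{n+2..m}. y i) / (y 1 - y k)) * Phi N a b rho y)
      = 1/2 * (LINT y:Lam N|lebN N. complex_of_real 0 * Phi N a b rho y)"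
    by (rule set_integral_divided_difference[OF _ _ int diff[unfolded t_def]]) (use nk km mN in auto)
  then show ?thesis
    by simp
qed

lemma integral_divided_difference_absent_index:
  fixes N m n k :: nat and a b rho :: complex
  assumes nm: "n < m" and mk: "m < k" and kN: "k \<le> N"
    and int: "set_integrable (lebN N) (Lam N)
       (\<lambda>y. complex_of_real (y 1 * (\<Prod>i\<in>{2..n+1}. (y i)\<^sup>2) * (\<Prod>i\<in>{n+2..m}. y i) / (y 1 - y k))
            * Phi N a b rho y)"
  shows "(LINT y:Lam N|lebN N. complex_of_real (y 1 * (\<Prod>i\<in>{2..n+1}. (y i)\<^sup>2) * (\<Prod>i\<in>{n+2..m}. y i) / (y 1 - y k)) * Phi N a b rho y)
      = (1/2) * (LINT y:Lam N|lebN N. complex_of_real ((\<Prod>i\<in>{1..n}. (y i)\<^sup>2) * (\<Prod>i\<in>{n+1..m-1}. y i)) * Phi N a b rho y)"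
proof -
  define t where "t = Transposition.transpose (1::nat) k"
  define Q where "Q y = (\<Prod>i\<in>{2..n+1}. (y i)\<^sup>2) * (\<Prod>i\<in>{n+2..m}. y i)" for y :: "nat \<Rightarrow> real"
  define target where "target y = (\<Prod>i\<in>{1..n}. (y i)\<^sup>2) * (\<Prod>i\<in>{n+1..m-1}. y i)" for y :: "nat \<Rightarrow> real"
  have diff: "y 1 * (\<Prod>i\<in>{2..n+1}. (y i)\<^sup>2) * (\<Prod>i\<in>{n+2..m}. y i)
      - (y \<circ> t) 1 * (\<Prod>i\<in>{2..n+1}. ((y \<circ> t) i)\<^sup>2) * (\<Prod>i\<in>{n+2..m}. (y \<circ> t) i) = (y 1 - y k) * Q y"
    if "y 1 \<noteq> y k" for y :: "nat \<Rightarrow> real"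
  proof -
    have "(y \<circ> t) i = y i" if "i \<in> {2..m}" for i
      using that mk by (auto simp: t_def)
    then have "Q (y \<circ> t) = Q y"
      unfolding Q_def using nm by (intro arg_cong2[where f = "(*)"] prod.cong) auto
    moreover have "(y \<circ> t) 1 = y k"
      by (simp add: t_def)
    ultimately show ?thesis
      by (simp add: Q_def algebra_simps)
  qed
  have "(LINT y:Lam N|lebN N. complex_of_real (y 1 * (\<Prod>i\<in>{2..n+1}. (y i)\<^sup>2) * (\<Prod>i\<in>{n+2..m}. y i) / (y 1 - y k)) * Phi N a b rho y)
      = 1/2 * (LINT y:Lam N|lebN N. complex_of_real (Q y) * Phi N a b rho y)"
    by (rule set_integral_divided_difference[OF _ _ int diff[unfolded t_def]]) (use nm mk kN in auto)
  also have "\<dots> = 1/2 * (LINT y:Lam N|lebN N. complex_of_real (target (y \<circ> cyclic_shift m)) * Phi N a b rho y)"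
  proof -
    have "target (y \<circ> cyclic_shift m) = Q y" for y
    proof -
      have "(1::nat) + 1 = 2" "n + 1 + 1 = n + 2" "m - 1 + 1 = m"
        using nm by auto
      then show ?thesis
        using prod_cyclic_shift[of 1 n m "\<lambda>i. (y i)\<^sup>2"] prod_cyclic_shift[of "n + 1" "m - 1" m y] nm
        by (simp only: target_def Q_def o_def)
    qed
    then show ?thesis
      by simp
  qed
  also have "\<dots> = 1/2 * (LINT y:Lam N|lebN N. complex_of_real (target y) * Phi N a b rho y)"
    using nm mk kN by (subst set_integral_Phi_comp_permutes[OF cyclic_shift_permutes, of m N target]) auto
  finally show ?thesis
    unfolding target_def .
qed

theorem lemma3:
  fixes N m n k :: nat and a b rho :: complex
  assumes adm: "admissible N a b rho"
    and nm: "n < m" and mN: "m \<le> N" and k2: "2 \<le> k" and kN: "k \<le> N"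
    and int_lhs: "set_integrable (lebN N) (Lam N)
       (\<lambda>y. complex_of_real (y 1 * (\<Prod>i\<in>{2..n+1}. (y i)\<^sup>2) * (\<Prod>i\<in>{n+2..m}. y i) / (y 1 - y k))
            * Phi N a b rho y)"
    and int_r1: "k \<le> n + 1 \<Longrightarrow> set_integrable (lebN N) (Lam N)
       (\<lambda>y. complex_of_real ((\<Prod>i\<in>{1..n-1}. (y i)\<^sup>2) * (\<Prod>i\<in>{n..m}. y i)) * Phi N a b rho y)"
    and int_r3: "m + 1 \<le> k \<Longrightarrow> set_integrable (lebN N) (Lam N)
       (\<lambda>y. complex_of_real ((\<Prod>i\<in>{1..n}. (y i)\<^sup>2) * (\<Prod>i\<in>{n+1..m-1}. y i)) * Phi N a b rho y)"
  shows
   "(k \<le> n + 1 \<longrightarrow>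
      (LINT y:Lam N|lebN N. complex_of_real (y 1 * (\<Prod>i\<in>{2..n+1}. (y i)\<^sup>2) * (\<Prod>i\<in>{n+2..m}. y i) / (y 1 - y k)) * Phi N a b rho y)
      = - (1/2) * (LINT y:Lam N|lebN N. complex_of_real ((\<Prod>i\<in>{1..n-1}. (y i)\<^sup>2) * (\<Prod>i\<in>{n..m}. y i)) * Phi N a b rho y))
  \<and> (n + 2 \<le> k \<and> k \<le> m \<longrightarrow>
      (LINT y:Lam N|lebN N. complex_of_real (y 1 * (\<Prod>i\<in>{2..n+1}. (y i)\<^sup>2) * (\<Prod>i\<in>{n+2..m}. y i) / (y 1 - y k)) * Phi N a b rho y)
      = 0)
  \<and> (m + 1 \<le> k \<longrightarrow>
      (LINT y:Lam N|lebN N. complex_of_real (y 1 * (\<Prod>i\<in>{2..n+1}. (y i)\<^sup>2) * (\<Prod>i\<in>{n+2..m}. y i) / (y 1 - y k)) * Phi N a b rho y)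
      = (1/2) * (LINT y:Lam N|lebN N. complex_of_real ((\<Prod>i\<in>{1..n}. (y i)\<^sup>2) * (\<Prod>i\<in>{n+1..m-1}. y i)) * Phi N a b rho y))"
proof (intro conjI impI)
  assume "k \<le> n + 1"
  then show "(LINT y:Lam N|lebN N. complex_of_real (y 1 * (\<Prod>i\<in>{2..n+1}. (y i)\<^sup>2) * (\<Prod>i\<in>{n+2..m}. y i) / (y 1 - y k)) * Phi N a b rho y)
      = - (1/2) * (LINT y:Lam N|lebN N. complex_of_real ((\<Prod>i\<in>{1..n-1}. (y i)\<^sup>2) * (\<Prod>i\<in>{n..m}. y i)) * Phi N a b rho y)"
    by (rule integral_divided_difference_square_index[OF k2 _ nm mN int_lhs])
next
  assume "n + 2 \<le> k \<and> k \<le> m"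
  then show "(LINT y:Lam N|lebN N. complex_of_real (y 1 * (\<Prod>i\<in>{2..n+1}. (y i)\<^sup>2) * (\<Prod>i\<in>{n+2..m}. y i) / (y 1 - y k)) * Phi N a b rho y) = 0"
    using integral_divided_difference_linear_index[OF _ _ mN int_lhs] by blast
next
  assume "m + 1 \<le> k"
  then show "(LINT y:Lam N|lebN N. complex_of_real (y 1 * (\<Prod>i\<in>{2..n+1}. (y i)\<^sup>2) * (\<Prod>i\<in>{n+2..m}. y i) / (y 1 - y k)) * Phi N a b rho y)
      = (1/2) * (LINT y:Lam N|lebN N. complex_of_real ((\<Prod>i\<in>{1..n}. (y i)\<^sup>2) * (\<Prod>i\<in>{n+1..m-1}. y i)) * Phi N a b rho y)"
    by (intro integral_divided_difference_absent_index[OF nm _ kN int_lhs]) simp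
qed

end
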